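(* Let $S$ and $A$ be finite-dimensional quantum systems with $d_A=\dim A$, let $\rho^A$ be a density matrix on $A$, $U^{SA}$ a unitary on $S\otimes A$, and define the CPTP map $\Phi(X):=\operatorname{Tr}_A[U^{SA}(X\otimes\rho^A)(U^{SA})^\dagger]$ on operators of $S$. Let $\Phi^\dagger$ be the trace-dual of $\Phi$. Then for every density matrix $\sigma$ on $S$, $\operatorname{Tr}[\Phi^\dagger(\sigma)]\le d_A$.
   Context: The trace-dual $\Phi^\dagger$ is the linear map satisfying $\operatorname{Tr}[\Phi(X)Y]=\operatorname{Tr}[X\Phi^\dagger(Y)]$ for all operators $X,Y$. *)

theory Defs
  imports "Jordan_Normal_Form.Matrix"
begin

definition adj :: "complex mat \<Rightarrow> complex mat" where
  "adj M = mat (dim_col M) (dim_row M) (\<lambda>(i,j). cnj (M $$ (j,i)))"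

definition tr :: "complex mat \<Rightarrow> complex" where
  "tr M = (\<Sum>i<dim_row M. M $$ (i,i))"

(* Positive semidefinite n x n matrix (order on complex: 0 \<le> z iff z real and nonnegative) *)
definition psd :: "nat \<Rightarrow> complex mat \<Rightarrow> bool" where
  "psd n M \<longleftrightarrow> M \<in> carrier_mat n n \<and> adj M = M \<and>
     (\<forall>v \<in> carrier_vec n. 0 \<le> conjugate v \<bullet> (M *\<^sub>v v))"

definition density :: "nat \<Rightarrow> complex mat \<Rightarrow> bool" where
  "density n M \<longleftrightarrow> psd n M \<and> tr M = 1"

definition unitary :: "nat \<Rightarrow> complex mat \<Rightarrow> bool" where
  "unitary n U \<longleftrightarrow> U \<in> carrier_mat n n \<and> adj U * U = 1\<^sub>m n \<and> U * adj U = 1\<^sub>m n"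

(* Tensor (Kronecker) product X \<otimes> R for X on S (dim dS) and R on A (dim dA);
   basis |s> \<otimes> |a> of S \<otimes> A has index s * dA + a *)
definition kron :: "nat \<Rightarrow> nat \<Rightarrow> complex mat \<Rightarrow> complex mat \<Rightarrow> complex mat" where
  "kron dS dA X R = mat (dS * dA) (dS * dA)
     (\<lambda>(i,j). X $$ (i div dA, j div dA) * R $$ (i mod dA, j mod dA))"

definition ptrace_A :: "nat \<Rightarrow> nat \<Rightarrow> complex mat \<Rightarrow> complex mat" where
  "ptrace_A dS dA M = mat dS dS (\<lambda>(s,t). \<Sum>a<dA. M $$ (s * dA + a, t * dA + a))"

definition Phi :: "nat \<Rightarrow> nat \<Rightarrow> complex mat \<Rightarrow> complex mat \<Rightarrow> complex mat \<Rightarrow> complex mat" where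
  "Phi dS dA U \<rho> X = ptrace_A dS dA (U * kron dS dA X \<rho> * adj U)"

end

theory Submission
  imports Defs
begin

text \<open>
  By duality, \<open>Tr[\<Phi>\<^sup>\<dagger>(\<sigma>)] = Tr[\<Phi>(1) \<sigma>] = Tr[(1 \<otimes> \<rho>) W]\<close> with
  \<open>W = U\<^sup>\<dagger> (\<sigma> \<otimes> 1) U\<close> positive semidefinite of trace \<open>d\<^sub>A\<close>.
  The right-hand side splits into \<open>\<Sum>\<^sub>s Tr[\<rho> W\<^sub>s\<^sub>s]\<close> over the diagonal blocks of \<open>W\<close>, which
  are again positive semidefinite, and \<open>Tr[\<rho> B] \<le> Tr \<rho> \<cdot> Tr B = Tr B\<close> for positive
  semidefinite \<open>B\<close>, entrywise from \<open>|B\<^sub>i\<^sub>j|\<^sup>2 \<le> B\<^sub>i\<^sub>i B\<^sub>j\<^sub>j\<close> and AM-GM.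
  Summing over \<open>s\<close> gives \<open>Tr W = d\<^sub>A\<close>.
\<close>

lemma sum_lessThan_mult:
  fixes f :: "nat \<Rightarrow> 'a::comm_monoid_add"
  shows "(\<Sum>i<m * d. f i) = (\<Sum>s<m. \<Sum>a<d. f (s * d + a))"
proof (induction m)
  case 0
  then show ?case by simp
next
  case (Suc m)
  have "(\<Sum>i<Suc m * d. f i) = (\<Sum>i<m * d. f i) + (\<Sum>i\<in>{m * d..<m * d + d}. f i)"
    by (simp add: add.commute lessThan_atLeast0 sum.atLeastLessThan_concat)
  also have "(\<Sum>i\<in>{m * d..<m * d + d}. f i) = (\<Sum>a<d. f (m * d + a))"
    by (simp add: lessThan_atLeast0 sum.shift_bounds_nat_ivl[of f 0 "m * d" d, simplified] add.commute)
  finally show ?case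
    using Suc by simp
qed

lemma mult_add_less_mult:
  fixes s a :: nat
  assumes "s < m" "a < d"
  shows "s * d + a < m * d"
proof -
  have "s * d + a < Suc s * d"
    using assms by simp
  also have "\<dots> \<le> m * d"
    using assms by (intro mult_le_mono1) simp
  finally show ?thesis .
qed

lemma adj_dim [simp]: "dim_row (adj A) = dim_col A" "dim_col (adj A) = dim_row A"
  unfolding adj_def by simp_all

lemma adj_carrier [simp]: "A \<in> carrier_mat n m \<Longrightarrow> adj A \<in> carrier_mat m n"
  unfolding adj_def by simp

lemma adj_index [simp]:
  "A \<in> carrier_mat n m \<Longrightarrow> i < m \<Longrightarrow> j < n \<Longrightarrow> adj A $$ (i, j) = cnj (A $$ (j, i))"
  unfolding adj_def by simp

lemma adj_adj: "A \<in> carrier_mat n m \<Longrightarrow> adj (adj A) = A"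
  by (intro eq_matI) (auto simp: adj_def)

lemma adj_mult:
  assumes "A \<in> carrier_mat n m" "B \<in> carrier_mat m k"
  shows "adj (A * B) = adj B * adj A"
  using assms
  by (intro eq_matI) (auto simp: adj_def scalar_prod_def row_def col_def mult.commute)

lemma conjugate_scalar_prod_adj_mult_vec:
  fixes A :: "complex mat"
  assumes "A \<in> carrier_mat n m" "v \<in> carrier_vec m" "z \<in> carrier_vec n"
  shows "conjugate v \<bullet> (adj A *\<^sub>v z) = conjugate (A *\<^sub>v v) \<bullet> z"
proof -
  have "conjugate v \<bullet> (adj A *\<^sub>v z) = (\<Sum>k<m. cnj (v $ k) * (\<Sum>l<n. cnj (A $$ (l, k)) * z $ l))"
    using assms by (simp add: scalar_prod_def mult_mat_vec_def row_def lessThan_atLeast0)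
  also have "\<dots> = (\<Sum>l<n. (\<Sum>k<m. cnj (A $$ (l, k)) * cnj (v $ k)) * z $ l)"
    by (simp add: sum_distrib_left sum_distrib_right mult_ac) (rule sum.swap)
  also have "\<dots> = conjugate (A *\<^sub>v v) \<bullet> z"
    using assms by (simp add: scalar_prod_def mult_mat_vec_def row_def lessThan_atLeast0)
  finally show ?thesis .
qed

lemma quadratic_form_eq_sum:
  fixes M :: "complex mat"
  assumes "M \<in> carrier_mat n n" "v \<in> carrier_vec n"
  shows "conjugate v \<bullet> (M *\<^sub>v v) = (\<Sum>k<n. \<Sum>l<n. cnj (v $ k) * M $$ (k, l) * v $ l)"
  using assms
  by (simp add: scalar_prod_def mult_mat_vec_def row_def sum_distrib_left mult.assoc lessThan_atLeast0)

lemma tr_mult: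
  assumes "A \<in> carrier_mat n m" "B \<in> carrier_mat m n"
  shows "tr (A * B) = (\<Sum>i<n. \<Sum>j<m. A $$ (i, j) * B $$ (j, i))"
  using assms unfolding tr_def
  by (simp add: scalar_prod_def row_def col_def lessThan_atLeast0)

lemma tr_mult_commute:
  assumes "A \<in> carrier_mat n m" "B \<in> carrier_mat m n"
  shows "tr (A * B) = tr (B * A)"
  unfolding tr_mult[OF assms] tr_mult[OF assms(2,1)]
  by (subst sum.swap) (simp add: mult.commute)

lemma tr_one_mat: "tr (1\<^sub>m n) = of_nat n"
proof -
  have "tr (1\<^sub>m n) = (\<Sum>i<n. 1)"
    unfolding tr_def by (intro sum.cong) auto
  then show ?thesis
    by simp
qed

lemma tr_adj: "A \<in> carrier_mat n n \<Longrightarrow> tr (adj A) = cnj (tr A)"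
  unfolding tr_def by simp

lemma tr_mult_cycle:
  assumes "U \<in> carrier_mat n n" "K \<in> carrier_mat n n" "S \<in> carrier_mat n n"
  shows "tr (U * K * adj U * S) = tr (K * (adj U * S * U))"
proof -
  have "tr (U * K * adj U * S) = tr (U * (K * (adj U * S)))"
    using assms by (simp add: assoc_mult_mat[of _ n n _ n _ n])
  also have "\<dots> = tr (K * (adj U * S) * U)"
    using assms by (intro tr_mult_commute) auto
  also have "K * (adj U * S) * U = K * (adj U * S * U)"
    by (rule assoc_mult_mat) (use assms in auto)
  finally show ?thesis .
qed

lemma tr_unitary_conj:
  assumes U: "U \<in> carrier_mat n n" "U * adj U = 1\<^sub>m n" and S: "S \<in> carrier_mat n n"
  shows "tr (adj U * S * U) = tr S"
proof -
  have "tr (adj U * S * U) = tr (U * (adj U * S))"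
    using U S by (intro tr_mult_commute) auto
  also have "U * (adj U * S) = U * adj U * S"
    using assoc_mult_mat[OF U(1) adj_carrier[OF U(1)] S] by simp
  finally show ?thesis
    using U S by simp
qed

lemma psd_carrier: "psd n M \<Longrightarrow> M \<in> carrier_mat n n"
  unfolding psd_def by simp

lemma psd_hermitian:
  assumes "psd n M" "i < n" "j < n"
  shows "M $$ (j, i) = cnj (M $$ (i, j))"
proof -
  have "adj M $$ (j, i) = cnj (M $$ (i, j))"
    using psd_carrier[OF assms(1)] assms(2,3) by simp
  then show ?thesis
    using assms unfolding psd_def by simp
qed

lemma psd_adj_mult_mult:
  assumes S: "psd n S" and U: "U \<in> carrier_mat n m"
  shows "psd m (adj U * S * U)"
proof -
  have Sc: "S \<in> carrier_mat n n" and hS: "adj S = S"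
    using S unfolding psd_def by auto
  have US: "adj U * S \<in> carrier_mat m n"
    using U Sc by auto
  have "adj (adj U * S * U) = adj U * adj (adj U * S)"
    by (rule adj_mult[OF US U])
  also have "adj (adj U * S) = adj S * adj (adj U)"
    by (rule adj_mult[OF adj_carrier[OF U] Sc])
  also have "\<dots> = S * U"
    using U hS by (simp add: adj_adj)
  also have "adj U * (S * U) = adj U * S * U"
    by (rule assoc_mult_mat[symmetric]) (use U Sc in auto)
  finally have hermitian: "adj (adj U * S * U) = adj U * S * U" .
  have nonneg: "0 \<le> conjugate v \<bullet> ((adj U * S * U) *\<^sub>v v)" if v: "v \<in> carrier_vec m" for v
  proof -
    have "(adj U * S * U) *\<^sub>v v = adj U *\<^sub>v (S *\<^sub>v (U *\<^sub>v v))"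
      using U Sc v US by (simp add: assoc_mult_mat_vec[of _ m n])
    then have "conjugate v \<bullet> ((adj U * S * U) *\<^sub>v v) = conjugate (U *\<^sub>v v) \<bullet> (S *\<^sub>v (U *\<^sub>v v))"
      using U Sc v by (simp add: conjugate_scalar_prod_adj_mult_vec)
    also have "0 \<le> \<dots>"
      using S U v unfolding psd_def by auto
    finally show ?thesis .
  qed
  show ?thesis
    unfolding psd_def using U Sc hermitian nonneg by auto
qed

text \<open>A principal submatrix is the compression \<open>P\<^sup>\<dagger> M P\<close> by a 0/1 matrix \<open>P\<close>.\<close>

lemma psd_submatrix:
  assumes M: "psd n M" and f: "\<And>i. i < m \<Longrightarrow> f i < n"
  shows "psd m (mat m m (\<lambda>(i, j). M $$ (f i, f j)))"
proof -
  define P where "P = mat n m (\<lambda>(k, i). if k = f i then 1 else 0 :: complex)"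
  have Pc: "P \<in> carrier_mat n m" and Mc: "M \<in> carrier_mat n n"
    using M psd_carrier unfolding P_def by auto
  have P_index: "P $$ (k, i) = (if k = f i then 1 else 0)" if "k < n" "i < m" for k i
    using that unfolding P_def by simp
  have left: "(adj P * M) $$ (i, l) = M $$ (f i, l)" if "i < m" "l < n" for i l
  proof -
    have "(adj P * M) $$ (i, l) = (\<Sum>k<n. adj P $$ (i, k) * M $$ (k, l))"
      using that Mc Pc by (simp add: scalar_prod_def lessThan_atLeast0)
    also have "\<dots> = (\<Sum>k<n. if k = f i then M $$ (k, l) else 0)"
      using that Pc by (intro sum.cong refl) (simp add: P_index)
    finally show ?thesis
      using that f by simp
  qed
  have "(adj P * M * P) $$ (i, j) = M $$ (f i, f j)" if "i < m" "j < m" for i j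
  proof -
    have "(adj P * M * P) $$ (i, j) = (\<Sum>l<n. (adj P * M) $$ (i, l) * P $$ (l, j))"
      using that Mc Pc by (simp add: scalar_prod_def lessThan_atLeast0)
    also have "\<dots> = (\<Sum>l<n. if l = f j then M $$ (f i, l) else 0)"
      using that by (intro sum.cong refl) (simp add: left P_index)
    finally show ?thesis
      using that f by simp
  qed
  then have "adj P * M * P = mat m m (\<lambda>(i, j). M $$ (f i, f j))"
    using Pc Mc by (intro eq_matI) auto
  then show ?thesis
    using psd_adj_mult_mult[OF M Pc] by simp
qed

lemma psd_pair_form_nonneg:
  assumes M: "psd n M" and "i < n" "j < n"
  shows "0 \<le> cnj x * x * M $$ (i, i) + cnj x * y * M $$ (i, j)
            + cnj y * x * M $$ (j, i) + cnj y * y * M $$ (j, j)"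
proof -
  define f where "f k = (if k = 0 then i else j)" for k :: nat
  define v where "v = vec 2 (\<lambda>k. if k = 0 then x else y)"
  have "psd 2 (mat 2 2 (\<lambda>(k, l). M $$ (f k, f l)))"
    using assms by (intro psd_submatrix) (auto simp: f_def)
  then have "0 \<le> conjugate v \<bullet> (mat 2 2 (\<lambda>(k, l). M $$ (f k, f l)) *\<^sub>v v)"
    unfolding psd_def v_def by auto
  then show ?thesis
    by (subst (asm) quadratic_form_eq_sum) (auto simp: v_def f_def numeral_2_eq_2 algebra_simps)
qed

lemma psd_diag_nonneg:
  assumes "psd n M" "i < n"
  shows "0 \<le> M $$ (i, i)"
  using psd_pair_form_nonneg[OF assms assms(2), of 1 0] by simp

lemma psd_diag_real:
  assumes "psd n M" "i < n"
  shows "M $$ (i, i) = of_real (Re (M $$ (i, i)))" "0 \<le> Re (M $$ (i, i))"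
  using psd_diag_nonneg[OF assms] by (auto simp: less_eq_complex_def complex_eq_iff)

lemma psd_offdiag_bound:
  assumes "psd n M" "i < n" "j < n"
  shows "(cmod (M $$ (i, j)))\<^sup>2 \<le> Re (M $$ (i, i)) * Re (M $$ (j, j))"
proof -
  define m where "m = M $$ (i, j)"
  define a where "a = Re (M $$ (i, i))"
  define c where "c = Re (M $$ (j, j))"
  have ji: "M $$ (j, i) = cnj m"
    using psd_hermitian[OF assms] m_def by simp
  have ii: "M $$ (i, i) = of_real a" and jj: "M $$ (j, j) = of_real c" and "a \<ge> 0" "c \<ge> 0"
    using psd_diag_real[OF assms(1,2)] psd_diag_real[OF assms(1,3)] a_def c_def by auto
  have norm_m: "(cmod m)\<^sup>2 = Re m * Re m + Im m * Im m"
    by (subst cmod_power2) (simp add: power2_eq_square)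
  have form: "0 \<le> Re (cnj x * x * M $$ (i, i) + cnj x * y * M $$ (i, j)
                       + cnj y * x * M $$ (j, i) + cnj y * y * M $$ (j, j))" for x y
    using psd_pair_form_nonneg[OF assms, of x y] by (simp add: less_eq_complex_def)
  \<comment> \<open>Evaluate the form at \<open>(-m, a)\<close>, \<open>(c, -cnj m)\<close> and \<open>(-m, 1)\<close>, for the cases
    \<open>a > 0\<close>, \<open>c > 0\<close> and \<open>a = c = 0\<close> respectively.\<close>
  have 1: "0 \<le> a * (a * c - (cmod m)\<^sup>2)"
    using form[of "-m" "of_real a"] unfolding ii jj ji m_def[symmetric] norm_m by (simp add: algebra_simps)
  have 2: "0 \<le> c * (a * c - (cmod m)\<^sup>2)"
    using form[of "of_real c" "-cnj m"] unfolding ii jj ji m_def[symmetric] norm_m by (simp add: algebra_simps)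
  have 3: "0 \<le> a * (cmod m)\<^sup>2 - 2 * (cmod m)\<^sup>2 + c"
    using form[of "-m" 1] unfolding ii jj ji m_def[symmetric] norm_m by (simp add: algebra_simps)
  have "(cmod m)\<^sup>2 \<le> a * c"
  proof (cases "a > 0 \<or> c > 0")
    case True
    then show ?thesis
      using 1 2 by (auto simp: zero_le_mult_iff)
  next
    case False
    then show ?thesis
      using 3 \<open>a \<ge> 0\<close> \<open>c \<ge> 0\<close> by simp
  qed
  then show ?thesis
    using a_def c_def m_def by simp
qed

lemma psd_entry_product_le:
  assumes A: "psd n A" and B: "psd n B" and "i < n" "j < n"
  shows "Re (A $$ (i, j) * B $$ (j, i))
           \<le> (Re (A $$ (i, i)) * Re (B $$ (j, j)) + Re (A $$ (j, j)) * Re (B $$ (i, i))) / 2"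
    (is "_ \<le> (?p * ?v + ?q * ?u) / 2")
proof -
  define X where "X = cmod (A $$ (i, j)) * cmod (B $$ (j, i))"
  have nonneg: "0 \<le> ?p" "0 \<le> ?q" "0 \<le> ?u" "0 \<le> ?v"
    using psd_diag_real(2)[OF A] psd_diag_real(2)[OF B] assms(3,4) by auto
  have "X\<^sup>2 \<le> (?p * ?q) * (?v * ?u)"
    unfolding X_def power_mult_distrib
    by (rule mult_mono[OF psd_offdiag_bound[OF A assms(3,4)] psd_offdiag_bound[OF B assms(4,3)]])
      (use nonneg in auto)
  also have "\<dots> = (?p * ?v) * (?q * ?u)"
    by (simp only: mult_ac)
  finally have "X \<le> sqrt ((?p * ?v) * (?q * ?u))"
    by (rule real_le_rsqrt)
  also have "\<dots> \<le> (?p * ?v + ?q * ?u) / 2"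
    using nonneg by (intro arith_geo_mean_sqrt) auto
  finally have "X \<le> (?p * ?v + ?q * ?u) / 2" .
  moreover have "Re (A $$ (i, j) * B $$ (j, i)) \<le> X"
    unfolding X_def by (metis complex_Re_le_cmod norm_mult)
  ultimately show ?thesis
    by linarith
qed

lemma psd_tr_eq_sum_Re_diag:
  assumes "psd n M"
  shows "tr M = of_real (\<Sum>i<n. Re (M $$ (i, i)))"
proof -
  have "tr M = (\<Sum>i<n. of_real (Re (M $$ (i, i))))"
    unfolding tr_def using psd_carrier[OF assms] psd_diag_real(1)[OF assms]
    by (intro sum.cong) auto
  then show ?thesis
    by simp
qed

lemma psd_tr_mult_le:
  assumes A: "psd n A" and B: "psd n B"
  shows "tr (A * B) \<le> tr A * tr B"
proof -
  have Ac: "A \<in> carrier_mat n n" and Bc: "B \<in> carrier_mat n n"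
    using A B psd_carrier by auto
  let ?a = "\<lambda>i. Re (A $$ (i, i))" and ?b = "\<lambda>i. Re (B $$ (i, i))"
  have "cnj (tr (A * B)) = tr (adj (A * B))"
    using Ac Bc by (simp add: tr_adj[of _ n])
  also have "adj (A * B) = adj B * adj A"
    by (rule adj_mult[OF Ac Bc])
  also have "\<dots> = B * A"
    using A B unfolding psd_def by simp
  also have "tr (B * A) = tr (A * B)"
    by (rule tr_mult_commute[OF Bc Ac])
  finally have "cnj (tr (A * B)) = tr (A * B)" .
  then have "Im (tr (A * B)) = 0"
    by (metis cnj.sel(2) neg_equal_zero)
  have "Re (tr (A * B)) = (\<Sum>i<n. \<Sum>j<n. Re (A $$ (i, j) * B $$ (j, i)))"
    by (simp add: tr_mult[OF Ac Bc] Re_sum)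
  also have "\<dots> \<le> (\<Sum>i<n. \<Sum>j<n. (?a i * ?b j + ?a j * ?b i) / 2)"
    by (intro sum_mono psd_entry_product_le[OF A B]) auto
  also have "\<dots> = ((\<Sum>i<n. \<Sum>j<n. ?a i * ?b j) + (\<Sum>i<n. \<Sum>j<n. ?a j * ?b i)) / 2"
    by (simp only: sum.distrib add_divide_distrib sum_divide_distrib)
  also have "(\<Sum>i<n. \<Sum>j<n. ?a j * ?b i) = (\<Sum>i<n. \<Sum>j<n. ?a i * ?b j)"
    by (rule sum.swap)
  also have "(\<Sum>i<n. \<Sum>j<n. ?a i * ?b j) = (\<Sum>i<n. ?a i) * (\<Sum>j<n. ?b j)"
    by (simp add: sum_product)
  finally have "Re (tr (A * B)) \<le> (\<Sum>i<n. ?a i) * (\<Sum>j<n. ?b j)"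
    by simp
  moreover have "tr A * tr B = of_real ((\<Sum>i<n. ?a i) * (\<Sum>j<n. ?b j))"
    unfolding psd_tr_eq_sum_Re_diag[OF A] psd_tr_eq_sum_Re_diag[OF B] by simp
  ultimately show ?thesis
    using \<open>Im (tr (A * B)) = 0\<close> by (simp add: less_eq_complex_def)
qed

lemma kron_dim [simp]:
  "dim_row (kron dS dA X R) = dS * dA" "dim_col (kron dS dA X R) = dS * dA"
  unfolding kron_def by simp_all

lemma kron_carrier [simp]: "kron dS dA X R \<in> carrier_mat (dS * dA) (dS * dA)"
  unfolding carrier_mat_def by simp

lemma kron_index:
  assumes "s < dS" "a < dA" "t < dS" "b < dA"
  shows "kron dS dA X R $$ (s * dA + a, t * dA + b) = X $$ (s, t) * R $$ (a, b)"
  using assms mult_add_less_mult[OF assms(1,2)] mult_add_less_mult[OF assms(3,4)]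
  unfolding kron_def by simp

lemma psd_kron_one_right:
  assumes \<sigma>: "psd dS \<sigma>"
  shows "psd (dS * dA) (kron dS dA \<sigma> (1\<^sub>m dA))"
proof -
  let ?S = "kron dS dA \<sigma> (1\<^sub>m dA)"
  have hermitian: "adj ?S = ?S"
  proof (intro eq_matI)
    fix i j
    assume "i < dim_row ?S" "j < dim_col ?S"
    then have "i < dS * dA" "j < dS * dA"
      by simp_all
    moreover have "dA > 0"
      using calculation by (cases dA) auto
    ultimately have "i div dA < dS" "j div dA < dS" "i mod dA < dA" "j mod dA < dA"
      by (auto simp: less_mult_imp_div_less)
    then show "adj ?S $$ (i, j) = ?S $$ (i, j)"
      using \<open>i < dS * dA\<close> \<open>j < dS * dA\<close> psd_hermitian[OF \<sigma>, of "i div dA" "j div dA"] unfolding kron_def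
      by (auto simp: adj_def)
  qed simp_all
  have nonneg: "0 \<le> conjugate v \<bullet> (?S *\<^sub>v v)" if v: "v \<in> carrier_vec (dS * dA)" for v
  proof -
    define w where "w a = vec dS (\<lambda>s. v $ (s * dA + a))" for a
    have "conjugate v \<bullet> (?S *\<^sub>v v) = (\<Sum>i<dS * dA. \<Sum>j<dS * dA. cnj (v $ i) * ?S $$ (i, j) * v $ j)"
      by (rule quadratic_form_eq_sum[OF kron_carrier v])
    also have "\<dots> = (\<Sum>s<dS. \<Sum>a<dA. \<Sum>t<dS. \<Sum>b<dA.
                        cnj (v $ (s * dA + a)) * ?S $$ (s * dA + a, t * dA + b) * v $ (t * dA + b))"
      by (simp add: sum_lessThan_mult)
    also have "\<dots> = (\<Sum>s<dS. \<Sum>a<dA. \<Sum>t<dS. \<Sum>b<dA.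
                        if b = a then cnj (v $ (s * dA + a)) * \<sigma> $$ (s, t) * v $ (t * dA + a) else 0)"
      by (intro sum.cong refl) (auto simp: kron_index)
    also have "\<dots> = (\<Sum>s<dS. \<Sum>a<dA. \<Sum>t<dS. cnj (v $ (s * dA + a)) * \<sigma> $$ (s, t) * v $ (t * dA + a))"
      by simp
    also have "\<dots> = (\<Sum>a<dA. conjugate (w a) \<bullet> (\<sigma> *\<^sub>v w a))"
      by (subst sum.swap) (simp add: quadratic_form_eq_sum[OF psd_carrier[OF \<sigma>]] w_def)
    also have "0 \<le> \<dots>"
      using \<sigma> unfolding psd_def by (intro sum_nonneg) (auto simp: w_def)
    finally show ?thesis .
  qed
  show ?thesis
    unfolding psd_def using hermitian nonneg by auto
qed

definition diag_block :: "nat \<Rightarrow> nat \<Rightarrow> complex mat \<Rightarrow> complex mat" where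
  "diag_block d s M = mat d d (\<lambda>(a, b). M $$ (s * d + a, s * d + b))"

lemma psd_diag_block:
  assumes "psd (m * d) M" "s < m"
  shows "psd d (diag_block d s M)"
  unfolding diag_block_def using assms by (intro psd_submatrix) (auto intro: mult_add_less_mult)

lemma tr_eq_sum_diag_block:
  assumes "M \<in> carrier_mat (m * d) (m * d)"
  shows "tr M = (\<Sum>s<m. tr (diag_block d s M))"
  using assms unfolding tr_def diag_block_def by (simp add: sum_lessThan_mult)

lemma tr_kron:
  assumes "X \<in> carrier_mat dS dS" "R \<in> carrier_mat dA dA"
  shows "tr (kron dS dA X R) = tr X * tr R"
  using assms unfolding tr_def
  by (simp add: sum_lessThan_mult kron_index sum_product)

lemma tr_ptrace_A_mult:
  assumes M: "M \<in> carrier_mat (dS * dA) (dS * dA)" and X: "X \<in> carrier_mat dS dS"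
  shows "tr (ptrace_A dS dA M * X) = tr (M * kron dS dA X (1\<^sub>m dA))"
proof -
  have "tr (ptrace_A dS dA M * X)
      = (\<Sum>s<dS. \<Sum>a<dA. \<Sum>t<dS. M $$ (s * dA + a, t * dA + a) * X $$ (t, s))"
    using X unfolding ptrace_A_def
    by (simp add: tr_mult[of _ dS dS] sum_distrib_right sum.swap[of _ "{..<dS}" "{..<dA}"])
  also have "\<dots> = (\<Sum>s<dS. \<Sum>a<dA. \<Sum>t<dS. \<Sum>b<dA.
                    if b = a then M $$ (s * dA + a, t * dA + b) * X $$ (t, s) else 0)"
    by simp
  also have "\<dots> = (\<Sum>s<dS. \<Sum>a<dA. \<Sum>t<dS. \<Sum>b<dA.
                    M $$ (s * dA + a, t * dA + b) * kron dS dA X (1\<^sub>m dA) $$ (t * dA + b, s * dA + a))"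
    by (intro sum.cong refl) (auto simp: kron_index)
  also have "\<dots> = tr (M * kron dS dA X (1\<^sub>m dA))"
    using M by (simp add: tr_mult[of _ "dS * dA" "dS * dA"] sum_lessThan_mult)
  finally show ?thesis .
qed

lemma tr_kron_one_left_mult:
  assumes R: "R \<in> carrier_mat dA dA" and M: "M \<in> carrier_mat (dS * dA) (dS * dA)"
  shows "tr (kron dS dA (1\<^sub>m dS) R * M) = (\<Sum>s<dS. tr (R * diag_block dA s M))"
proof -
  have "tr (kron dS dA (1\<^sub>m dS) R * M)
      = (\<Sum>s<dS. \<Sum>a<dA. \<Sum>t<dS. \<Sum>b<dA.
           kron dS dA (1\<^sub>m dS) R $$ (s * dA + a, t * dA + b) * M $$ (t * dA + b, s * dA + a))"
    using M by (simp add: tr_mult[of _ "dS * dA" "dS * dA"] sum_lessThan_mult)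
  also have "\<dots> = (\<Sum>s<dS. \<Sum>a<dA. \<Sum>t<dS.
                    if t = s then \<Sum>b<dA. R $$ (a, b) * M $$ (s * dA + b, s * dA + a) else 0)"
    by (intro sum.cong refl) (auto simp: kron_index)
  also have "\<dots> = (\<Sum>s<dS. \<Sum>a<dA. \<Sum>b<dA. R $$ (a, b) * M $$ (s * dA + b, s * dA + a))"
    by simp
  also have "\<dots> = (\<Sum>s<dS. tr (R * diag_block dA s M))"
    using R by (simp add: tr_mult[of _ dA dA] diag_block_def)
  finally show ?thesis .
qed

theorem mainTheorem6:
  fixes dS dA :: nat and \<rho> U \<sigma> :: "complex mat"
    and PhiDual :: "complex mat \<Rightarrow> complex mat"
  assumes "dS > 0" and "dA > 0"
    and "density dA \<rho>"
    and "unitary (dS * dA) U"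
    and "\<forall>X \<in> carrier_mat dS dS. \<forall>Y \<in> carrier_mat dS dS.
           PhiDual Y \<in> carrier_mat dS dS \<and>
           tr (Phi dS dA U \<rho> X * Y) = tr (X * PhiDual Y)"
    and "density dS \<sigma>"
  shows "tr (PhiDual \<sigma>) \<le> of_nat dA"
proof -
  have \<rho>: "psd dA \<rho>" "tr \<rho> = 1" and \<sigma>: "psd dS \<sigma>" "tr \<sigma> = 1"
    using assms(3,6) unfolding density_def by auto
  have U: "U \<in> carrier_mat (dS * dA) (dS * dA)" "U * adj U = 1\<^sub>m (dS * dA)"
    using assms(4) unfolding unitary_def by auto
  define K where "K = kron dS dA (1\<^sub>m dS) \<rho>"
  define S where "S = kron dS dA \<sigma> (1\<^sub>m dA)"
  define W where "W = adj U * S * U"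
  have W: "psd (dS * dA) W"
    unfolding W_def S_def using psd_adj_mult_mult[OF psd_kron_one_right[OF \<sigma>(1)] U(1)] .
  have "tr (PhiDual \<sigma>) = tr (Phi dS dA U \<rho> (1\<^sub>m dS) * \<sigma>)"
    using assms(5) psd_carrier[OF \<sigma>(1)] by force
  also have "\<dots> = tr (U * K * adj U * S)"
    unfolding Phi_def K_def S_def using U(1) psd_carrier[OF \<sigma>(1)] by (intro tr_ptrace_A_mult) auto
  also have "\<dots> = tr (K * W)"
    unfolding W_def K_def S_def using U(1) by (intro tr_mult_cycle) auto
  also have "\<dots> = (\<Sum>s<dS. tr (\<rho> * diag_block dA s W))"
    unfolding K_def using psd_carrier[OF \<rho>(1)] psd_carrier[OF W] by (rule tr_kron_one_left_mult)
  also have "\<dots> \<le> (\<Sum>s<dS. tr (diag_block dA s W))"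
    using psd_tr_mult_le[OF \<rho>(1) psd_diag_block[OF W]] \<rho>(2) by (intro sum_mono) auto
  also have "\<dots> = tr W"
    using psd_carrier[OF W] by (rule tr_eq_sum_diag_block[symmetric])
  also have "\<dots> = tr S"
    unfolding W_def S_def using U by (intro tr_unitary_conj) auto
  also have "\<dots> = tr \<sigma> * tr (1\<^sub>m dA)"
    unfolding S_def using psd_carrier[OF \<sigma>(1)] by (simp add: tr_kron)
  also have "\<dots> = of_nat dA"
    using \<sigma>(2) by (simp add: tr_one_mat)
  finally show ?thesis .
qed

end
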